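(* Fix a day $d_i$ in a run of the online greedy algorithm on an instance of Model 1, and let $H_i$ be the weighted bipartite graph with category capacities $b'_{i,k}$ constructed on that day. Then any maximum-weight $b$-matching in $H_i$ among those of size at most $s_i$ is also a maximum-size $b$-matching in $H_i$ among those of size at most $s_i$.
   Context: Model 1: finite sets of agents $A$, categories $C$ and days $D=\{d_1,\dots,d_T\}$; each agent is eligible for a subset of categories; daily supply $s_i$ for day $d_i$; daily quota $q_{ik}$ for category $c_k$ on day $d_i$; each agent $a_j$ has a priority factor $\alpha_j>0$ and a set of available days; discount factor $\delta\in(0,1)$. In the online greedy algorithm, on day $d_i$ the set $A_i$ consists of the agents available on $d_i$ and not yet allocated on earlier days; $H_i$ is the bipartite graph with parts $A_i$ and $C$, with an edge $(a_j,c_k)$ whenever $a_j$ is eligible for $c_k$, of weight $w_i(a_j,c_k)=\alpha_j\delta^{i-1}$; each agent has capacity $1$ and category $c_k$ has capacity $b'_{i,k}=q_{ik}$. A $b$-matching is a set of edges in which each vertex is incident to at most its capacity many edges; its size is its number of edges and its weight is the sum of edge weights. *)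

theory Defs
  imports Complex_Main
begin

definition H_edges :: "'a set \<Rightarrow> 'c set \<Rightarrow> ('a \<Rightarrow> 'c \<Rightarrow> bool) \<Rightarrow> ('a \<times> 'c) set" where
  "H_edges Ai C elig = {(a, c). a \<in> Ai \<and> c \<in> C \<and> elig a c}"

definition H_weight :: "('a \<Rightarrow> real) \<Rightarrow> real \<Rightarrow> nat \<Rightarrow> 'a \<times> 'c \<Rightarrow> real" where
  "H_weight \<alpha> \<delta> i e = \<alpha> (fst e) * \<delta> ^ (i - 1)"

definition is_bmatching ::
  "('a \<times> 'c) set \<Rightarrow> ('a \<Rightarrow> nat) \<Rightarrow> ('c \<Rightarrow> nat) \<Rightarrow> ('a \<times> 'c) set \<Rightarrow> bool" where
  "is_bmatching E bA bC M \<longleftrightarrow>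
     M \<subseteq> E \<and>
     (\<forall>a. card {c. (a, c) \<in> M} \<le> bA a) \<and>
     (\<forall>c. card {a. (a, c) \<in> M} \<le> bC c)"

definition bm_weight :: "('a \<times> 'c \<Rightarrow> real) \<Rightarrow> ('a \<times> 'c) set \<Rightarrow> real" where
  "bm_weight w M = (\<Sum>e\<in>M. w e)"

end

theory Submission
  imports Defs
begin

text \<open>Agents have capacity 1 and every edge at an agent carries that agent's weight, so the
  weight of a b-matching is the total positive weight of its matched agents. An exchange
  argument shows that a b-matching M smaller than a b-matching M' can be replaced by one of
  size |M'| that still matches every agent matched by M; that b-matching is strictly heavier
  than M.\<close>

lemma finite_partners_of_agent: "finite M \<Longrightarrow> finite {c. (a, c) \<in> M}"
  by (rule finite_subset[of _ "snd ` M"]) force+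

lemma finite_partners_of_category: "finite M \<Longrightarrow> finite {a. (a, c) \<in> M}"
  by (rule finite_subset[of _ "fst ` M"]) force+

lemma is_bmatching_finite: "finite E \<Longrightarrow> is_bmatching E bA bC M \<Longrightarrow> finite M"
  unfolding is_bmatching_def by (blast intro: finite_subset)

lemma unit_bmatching_inj_fst:
  assumes M: "is_bmatching E (\<lambda>_. 1) bC M" and fin: "finite M"
  shows "inj_on fst M"
proof (rule inj_onI)
  fix x y assume xy: "x \<in> M" "y \<in> M" "fst x = fst y"
  have "card {c. (fst x, c) \<in> M} \<le> Suc 0"
    using M unfolding is_bmatching_def by simp
  then have "\<forall>c1\<in>{c. (fst x, c) \<in> M}. \<forall>c2\<in>{c. (fst x, c) \<in> M}. c1 = c2"
    using card_le_Suc0_iff_eq[OF finite_partners_of_agent[OF fin]] by blast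
  moreover have "snd x \<in> {c. (fst x, c) \<in> M}" "snd y \<in> {c. (fst x, c) \<in> M}"
    using xy by (metis mem_Collect_eq prod.collapse)+
  ultimately show "x = y"
    using xy(3) by (simp add: prod_eq_iff)
qed

lemma bmatching_swap_edge:
  assumes M: "is_bmatching E (\<lambda>_. 1) bC M" and fin: "finite M"
    and bc: "(b, c) \<in> E" "b \<notin> fst ` M" and e: "e \<in> M"
    and room: "card {x. (x, c) \<in> M} < bC c \<or> snd e = c"
  shows "is_bmatching E (\<lambda>_. 1) bC (insert (b, c) (M - {e}))" (is "is_bmatching E _ bC ?N")
  unfolding is_bmatching_def
proof (intro conjI allI)
  show "?N \<subseteq> E"
    using M bc(1) unfolding is_bmatching_def by auto
next
  fix a
  have "{c'. (a, c') \<in> ?N} \<subseteq> (if a = b then {c} else {c'. (a, c') \<in> M})"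
    using bc(2) by (auto simp: rev_image_eqI)
  moreover have "card {c'. (a, c') \<in> M} \<le> 1"
    using M unfolding is_bmatching_def by blast
  ultimately show "card {c'. (a, c') \<in> ?N} \<le> 1"
    by (cases "a = b") (auto dest!: card_mono[rotated] simp: finite_partners_of_agent[OF fin])
next
  fix c'
  let ?S = "{x. (x, c') \<in> M}"
  have finS: "finite ?S" by (rule finite_partners_of_category[OF fin])
  have cap: "card ?S \<le> bC c'"
    using M unfolding is_bmatching_def by blast
  show "card {x. (x, c') \<in> ?N} \<le> bC c'"
  proof (cases "c' = c")
    case False
    then have "{x. (x, c') \<in> ?N} \<subseteq> ?S" by auto
    then show ?thesis
      using cap card_mono[OF finS] by (meson order_trans)
  next
    case True
    define X where "X = (if snd e = c then ?S - {fst e} else ?S)"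
    have N_at_c: "{x. (x, c') \<in> ?N} \<subseteq> insert b X"
      unfolding X_def using True by (auto simp: prod_eq_iff)
    have X: "0 < bC c' \<and> card X \<le> bC c' - 1"
    proof (cases "snd e = c")
      case e_at_c: True
      then have "fst e \<in> ?S"
        using e True by (metis mem_Collect_eq prod.collapse)
      then have "0 < card ?S" "card X = card ?S - 1"
        unfolding X_def using e_at_c finS by (auto simp: card_gt_0_iff)
      then show ?thesis
        using cap by linarith
    next
      case False
      then show ?thesis
        unfolding X_def using room True by simp
    qed
    have "card {x. (x, c') \<in> ?N} \<le> card (insert b X)"
      by (rule card_mono) (use N_at_c finS in \<open>auto simp: X_def\<close>)
    also have "\<dots> \<le> bC c'"
      using X by (intro card_insert_le_m1) auto
    finally show ?thesis .
  qed
qed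

lemma bmatching_exchange_edge:
  assumes M: "is_bmatching E bA bC M" and fin: "finite M" "finite M'"
    and less: "card M < card M'" and bc: "(b, c) \<in> M" "(b, c) \<notin> M'"
  obtains e where "e \<in> M' - M" "card {x. (x, c) \<in> M'} < bC c \<or> snd e = c"
proof (cases "card {x. (x, c) \<in> M'} < bC c")
  case True
  have "\<not> M' \<subseteq> M"
    using less card_mono[OF fin(1)] by (auto simp: not_le[symmetric])
  then show ?thesis
    using that True by blast
next
  case False
  let ?S = "{x. (x, c) \<in> M}" and ?S' = "{x. (x, c) \<in> M'}"
  have "\<not> ?S' \<subseteq> ?S"
  proof
    assume "?S' \<subseteq> ?S"
    then have "?S' \<subseteq> ?S - {b}"
      using bc(2) by auto
    then have "card ?S' \<le> card (?S - {b})"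
      by (rule card_mono[OF finite_Diff[OF finite_partners_of_category[OF fin(1)]]])
    also have "\<dots> < card ?S"
      using bc(1) finite_partners_of_category[OF fin(1)] by (intro card_Diff1_less) auto
    also have "\<dots> \<le> bC c"
      using M unfolding is_bmatching_def by blast
    finally show False
      using False by simp
  qed
  then obtain a where "(a, c) \<in> M'" "(a, c) \<notin> M"
    by auto
  then show ?thesis
    using that[of "(a, c)"] by auto
qed

lemma unit_bmatching_augment:
  assumes "finite E"
  shows "is_bmatching E (\<lambda>_. 1) bC M \<Longrightarrow> is_bmatching E (\<lambda>_. 1) bC M' \<Longrightarrow> card M < card M'
    \<Longrightarrow> \<exists>N. is_bmatching E (\<lambda>_. 1) bC N \<and> card N = card M' \<and> fst ` M \<subseteq> fst ` N"
proof (induction "card (M - M')" arbitrary: M' rule: less_induct)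
  case less
  have fin: "finite M" "finite M'"
    using is_bmatching_finite[OF assms less.prems(1)] is_bmatching_finite[OF assms less.prems(2)] .
  show ?case
  proof (cases "fst ` M \<subseteq> fst ` M'")
    case True
    then show ?thesis
      using less.prems by blast
  next
    case False
    then obtain b c where bc: "(b, c) \<in> M" "b \<notin> fst ` M'"
      by force
    then have bc_M': "(b, c) \<notin> M'"
      by force
    obtain e where e: "e \<in> M' - M" "card {x. (x, c) \<in> M'} < bC c \<or> snd e = c"
      using bmatching_exchange_edge[OF less.prems(1) fin less.prems(3) bc(1) bc_M'] .
    define M'' where "M'' = insert (b, c) (M' - {e})"
    have "(b, c) \<in> E"
      using less.prems(1) bc(1) unfolding is_bmatching_def by blast
    then have M''_bm: "is_bmatching E (\<lambda>_. 1) bC M''"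
      unfolding M''_def using bmatching_swap_edge[OF less.prems(2) fin(2) _ bc(2)] e by blast
    have "card M'' = card M'"
      unfolding M''_def using fin(2) e(1) bc_M' card_Suc_Diff1[OF fin(2), of e] by simp
    moreover have "M - M'' = (M - M') - {(b, c)}"
      unfolding M''_def using e(1) by auto
    then have "card (M - M'') < card (M - M')"
      using bc(1) bc_M' fin(1) by (metis DiffI card_Diff1_less finite_Diff)
    ultimately show ?thesis
      using less.hyps[OF _ less.prems(1) M''_bm] less.prems(3) by presburger
  qed
qed

lemma bm_weight_agent_weight:
  assumes "inj_on fst M"
  shows "bm_weight (\<lambda>e. g (fst e)) M = (\<Sum>a\<in>fst ` M. g a)"
  unfolding bm_weight_def using sum.reindex[OF assms, of g] by (simp add: o_def)

theorem unit_bmatching_max_weight_imp_max_card: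
  fixes g :: "'a \<Rightarrow> real"
  assumes finE: "finite E" and pos: "\<forall>a\<in>fst ` E. 0 < g a"
    and M: "is_bmatching E (\<lambda>_. 1) bC M" "card M \<le> s"
    and M_maxw: "\<forall>M'. is_bmatching E (\<lambda>_. 1) bC M' \<and> card M' \<le> s
                    \<longrightarrow> bm_weight (\<lambda>e. g (fst e)) M' \<le> bm_weight (\<lambda>e. g (fst e)) M"
    and M': "is_bmatching E (\<lambda>_. 1) bC M'" "card M' \<le> s"
  shows "card M' \<le> card M"
proof (rule ccontr)
  assume "\<not> card M' \<le> card M"
  then obtain N where N: "is_bmatching E (\<lambda>_. 1) bC N" "card N = card M'" "fst ` M \<subseteq> fst ` N"
    using unit_bmatching_augment[OF finE M(1) M'(1)] by force
  have fin: "finite M" "finite N"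
    using is_bmatching_finite[OF finE] M(1) N(1) by blast+
  have inj: "inj_on fst M" "inj_on fst N"
    using unit_bmatching_inj_fst M(1) N(1) fin by blast+
  have "card (fst ` M) < card (fst ` N)"
    using \<open>\<not> card M' \<le> card M\<close> N(2) card_image[OF inj(1)] card_image[OF inj(2)] by simp
  then have "\<not> fst ` N \<subseteq> fst ` M"
    using card_mono[OF finite_imageI[OF fin(1)], of "fst ` N" fst] by linarith
  then obtain a where a: "a \<in> fst ` N - fst ` M"
    by blast
  have "fst ` N \<subseteq> fst ` E"
    using N(1) unfolding is_bmatching_def by blast
  then have g_pos: "0 < g x" if "x \<in> fst ` N" for x
    using pos that by blast
  have "(\<Sum>a\<in>fst ` M. g a) < (\<Sum>a\<in>fst ` N. g a)"
    using a by (intro sum_strict_mono2[OF finite_imageI[OF fin(2)] N(3) a] g_pos less_imp_le) auto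
  then have "bm_weight (\<lambda>e. g (fst e)) M < bm_weight (\<lambda>e. g (fst e)) N"
    by (simp add: bm_weight_agent_weight inj)
  moreover have "bm_weight (\<lambda>e. g (fst e)) N \<le> bm_weight (\<lambda>e. g (fst e)) M"
    using M_maxw N(1,2) M'(2) by auto
  ultimately show False
    by simp
qed

theorem lemma1:
  fixes A :: "'a set" and C :: "'c set"
    and elig :: "'a \<Rightarrow> 'c \<Rightarrow> bool"
    and T :: nat and s :: "nat \<Rightarrow> nat" and q :: "nat \<Rightarrow> 'c \<Rightarrow> nat"
    and \<alpha> :: "'a \<Rightarrow> real" and avail :: "'a \<Rightarrow> nat set" and \<delta> :: real
    and i :: nat and Ai :: "'a set" and M :: "('a \<times> 'c) set"
  assumes finA: "finite A" and finC: "finite C"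
    and alpha_pos: "\<forall>a\<in>A. \<alpha> a > 0"
    and delta: "0 < \<delta>" "\<delta> < 1"
    and day: "1 \<le> i" "i \<le> T"
    and Ai: "Ai \<subseteq> {a \<in> A. i \<in> avail a}"
    and M_bm: "is_bmatching (H_edges Ai C elig) (\<lambda>_. 1) (q i) M"
    and M_size: "card M \<le> s i"
    and M_maxw: "\<forall>M'. is_bmatching (H_edges Ai C elig) (\<lambda>_. 1) (q i) M' \<and> card M' \<le> s i
                    \<longrightarrow> bm_weight (H_weight \<alpha> \<delta> i) M' \<le> bm_weight (H_weight \<alpha> \<delta> i) M"
  shows "\<forall>M'. is_bmatching (H_edges Ai C elig) (\<lambda>_. 1) (q i) M' \<and> card M' \<le> s i
            \<longrightarrow> card M' \<le> card M"
proof -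
  define g where "g a = \<alpha> a * \<delta> ^ (i - 1)" for a
  have weight: "H_weight \<alpha> \<delta> i = (\<lambda>e. g (fst e))"
    by (simp add: H_weight_def g_def fun_eq_iff)
  have "H_edges Ai C elig \<subseteq> A \<times> C"
    using Ai unfolding H_edges_def by auto
  then have finE: "finite (H_edges Ai C elig)"
    using finA finC finite_subset by blast
  have "\<forall>a\<in>fst ` H_edges Ai C elig. 0 < g a"
    using Ai alpha_pos delta unfolding H_edges_def g_def by auto
  from unit_bmatching_max_weight_imp_max_card[OF finE this M_bm M_size]
  show ?thesis
    using M_maxw unfolding weight by blast
qed

end
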